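(* For an integer $n$, let $q=P^{+}(g(n))$ and define \[ \varepsilon_1=\sup_{x\ge q/2}\left|\frac{\theta(x)}{x}-1\right|,\qquad \varepsilon_2=\max\left(1-\eta_3\!\left(\frac q4\right),\ \left(\frac{\log q}{\sqrt q}\right)^2\right)<1,\qquad \varepsilon=\varepsilon_1+\sqrt{\varepsilon_2}. \] Then, as $n\to+\infty$, \[ q=P^{+}(g(n))\le \log g(n)\,\big(1+O(\varepsilon)\big). \]
   Context: $g(n)$ is the maximal order of an element of $\mathfrak S_n$, i.e. $g(n)=\max\{M\ge1:\ell(M)\le n\}$ with $\ell$ additive, $\ell(1)=0$, $\ell(p^a)=p^a$; $P^{+}(M)$ is the largest prime factor of $M$. $\theta(x)=\sum_{p\le x}\log p$. $p_i$ is the $i$-th prime and for $x\ge p_3=5$, $\eta_3(x)=\min\{p_{i-3}/p_i:\ p_i>x\}$. *)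

theory Defs
  imports "HOL-Analysis.Analysis" "HOL-Computational_Algebra.Primes" "HOL-Library.Infinite_Set"
begin

definition ell :: "nat \<Rightarrow> nat" where
  "ell M = (\<Sum>p\<in>prime_factors M. p ^ multiplicity p M)"

(* Landau's function: maximal order of an element of S_n *)
definition landau_g :: "nat \<Rightarrow> nat" where
  "landau_g n = Max {M. M \<ge> 1 \<and> ell M \<le> n}"

definition Pplus :: "nat \<Rightarrow> nat" where
  "Pplus M = Max (prime_factors M)"

definition cheb_theta :: "real \<Rightarrow> real" where
  "cheb_theta x = (\<Sum>p\<in>{p::nat. prime p \<and> real p \<le> x}. ln (real p))"

(* the i-th prime, 1-indexed: p_1 = 2, p_2 = 3, ... *)
definition pr :: "nat \<Rightarrow> nat" where
  "pr i = enumerate {p::nat. prime p} (i - 1)"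

(* eta_3(x) = min { p_{i-3} / p_i : p_i > x }  (for x >= 5 this forces i >= 4) *)
definition eta3 :: "real \<Rightarrow> real" where
  "eta3 x = Inf {real (pr (i - 3)) / real (pr i) | i. i \<ge> 4 \<and> real (pr i) > x}"

definition eps1 :: "nat \<Rightarrow> real" where
  "eps1 n = (let q = real (Pplus (landau_g n)) in
     Sup {\<bar>cheb_theta x / x - 1\<bar> | x. x \<ge> q / 2})"

definition eps2 :: "nat \<Rightarrow> real" where
  "eps2 n = (let q = real (Pplus (landau_g n)) in
     max (1 - eta3 (q / 4)) ((ln q / sqrt q) ^ 2))"

definition eps :: "nat \<Rightarrow> real" where
  "eps n = eps1 n + sqrt (eps2 n)"

end

theory Submission
  imports Defs "HOL-Real_Asymp.Real_Asymp"
begin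

text \<open>
  Write \<open>M = g(n)\<close>, \<open>q = P\<^sup>+(M)\<close>, and call a prime \<open>p < q\<close> missing if \<open>p \<nmid> M\<close>. Since
  \<open>log M \<ge> \<Sum>\<^bsub>p | M\<^esub> log p \<ge> \<theta>(q) - \<Sum>\<^bsub>p missing\<^esub> log p\<close> and \<open>\<theta>(q) \<ge> q (1 - \<epsilon>\<^sub>1)\<close>, it suffices to show
  that the missing primes contribute \<open>O(q \<epsilon>)\<close>, together with the crude bound \<open>log M \<ge> q/8\<close>.

  Everything rests on the maximality of \<open>g(n)\<close>: lowering the exponents of some primes of \<open>M\<close>
  and raising those of others must not produce a larger number with \<open>\<ell> \<le> n\<close>. Trading \<open>q\<close> for two
  missing primes \<open>u, v\<close> shows that \<open>u + v \<le> q\<close> forces \<open>uv \<le> q\<close>; hence at most one missing prime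
  lies in \<open>(\<surd>q, q/2]\<close>, and the missing primes below \<open>q/2\<close> contribute \<open>O(\<surd>q log q)\<close>.
  Above \<open>q/2\<close>, a missing prime \<open>s \<le> \<surd>q\<close> confines the missing primes to \<open>[q - s, q)\<close>.
  Otherwise all primes \<open>\<le> \<surd>q\<close> divide \<open>M\<close>, every missing prime above \<open>q/2\<close> exceeds \<open>5q/8\<close>,
  and for the two smallest ones \<open>p\<^sub>1 < p\<^sub>2\<close> the window \<open>[p\<^sub>1 + p\<^sub>2 - q, p\<^sub>1p\<^sub>2/q)\<close> contains
  at most one prime; via \<open>\<eta>\<^sub>3\<close> this gives \<open>q - p\<^sub>2 = O(q \<surd>\<epsilon>\<^sub>2)\<close>, and the missing primes
  beyond \<open>p\<^sub>2\<close> are bounded by \<open>\<theta>(q) - \<theta>(p\<^sub>2) = O(q \<epsilon>)\<close>.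
\<close>

section \<open>Landau's function and exchanges\<close>

definition ell_pow :: "nat \<Rightarrow> nat \<Rightarrow> nat" where
  "ell_pow k p = (if k = 0 then 0 else p ^ k)"

lemma ell_pow_Suc:
  assumes "p \<ge> 1"
  shows "ell_pow (Suc k) p = ell_pow k p + (if k = 0 then p else p ^ k * (p - 1))"
proof -
  have "p ^ k + p ^ k * (p - 1) = p ^ Suc k"
    using assms by (cases p) (simp_all add: algebra_simps)
  thus ?thesis by (simp add: ell_pow_def)
qed

lemma ell_prod_prime_powers:
  assumes "finite S" "\<forall>p\<in>S. prime p"
  shows "ell (\<Prod>p\<in>S. p ^ f p) = (\<Sum>p\<in>S. ell_pow (f p) p)"
proof -
  define N where "N = (\<Prod>p\<in>S. p ^ f p)"
  have mult: "multiplicity p N = (if p \<in> S then f p else 0)" if "prime p" for p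
    unfolding N_def using assms that by (intro multiplicity_prod_prime_powers) auto
  have pf: "prime_factors N = {p\<in>S. f p > 0}"
    unfolding prime_factors_multiplicity using mult assms by (auto split: if_splits)
  have "ell N = (\<Sum>p\<in>{p\<in>S. f p > 0}. p ^ f p)"
    unfolding ell_def pf using mult assms by (intro sum.cong) auto
  also have "\<dots> = (\<Sum>p\<in>S. ell_pow (f p) p)"
    using assms(1) by (subst sum.inter_filter) (auto simp: ell_pow_def intro!: sum.cong)
  finally show ?thesis unfolding N_def .
qed

lemma ell_as_sum_ell_pow:
  assumes "finite A" "\<forall>p\<in>A. prime p" "prime_factors M \<subseteq> A"
  shows "ell M = (\<Sum>p\<in>A. ell_pow (multiplicity p M) p)"
proof -
  have "ell M = (\<Sum>p\<in>prime_factors M. ell_pow (multiplicity p M) p)"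
    unfolding ell_def ell_pow_def using prime_factors_multiplicity by (intro sum.cong) auto
  also have "\<dots> = (\<Sum>p\<in>A. ell_pow (multiplicity p M) p)"
    using assms by (intro sum.mono_neutral_left) (auto simp: ell_pow_def prime_factors_multiplicity)
  finally show ?thesis .
qed

lemma prime_power_le_ell:
  assumes "p \<in> prime_factors M"
  shows "p ^ multiplicity p M \<le> ell M"
  unfolding ell_def using assms by (intro member_le_sum) auto

lemma finite_ell_le: "finite {M. M \<ge> 1 \<and> ell M \<le> n}"
proof (rule finite_subset)
  show "{M. M \<ge> 1 \<and> ell M \<le> n} \<subseteq> {..n ^ n}"
  proof
    fix M :: nat assume "M \<in> {M. M \<ge> 1 \<and> ell M \<le> n}"
    hence M: "M \<ge> 1" "ell M \<le> n" by auto
    have pp: "p ^ multiplicity p M \<le> n" if "p \<in> prime_factors M" for p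
      using prime_power_le_ell[OF that] M(2) by linarith
    have "prime_factors M \<subseteq> {1..n}"
    proof
      fix p assume p: "p \<in> prime_factors M"
      hence "p \<le> p ^ multiplicity p M"
        by (intro self_le_power) (auto simp: prime_factors_multiplicity Suc_le_eq prime_gt_0_nat)
      thus "p \<in> {1..n}" using pp[OF p] p prime_ge_1_nat[of p] by auto
    qed
    hence card: "card (prime_factors M) \<le> n"
      using card_mono[of "{1..n}"] by fastforce
    have "M = (\<Prod>p\<in>prime_factors M. p ^ multiplicity p M)"
      using M(1) prime_factorization_nat by auto
    also have "\<dots> \<le> n ^ card (prime_factors M)"
      using prod_mono[of "prime_factors M" _ "\<lambda>_. n"] pp by simp
    also have "\<dots> \<le> n ^ n"
      using card by (cases "n = 0") (auto intro: power_increasing)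
    finally show "M \<in> {..n ^ n}" by simp
  qed
qed simp

lemma landau_g_ge_1: "landau_g n \<ge> 1"
  and ell_landau_g_le: "ell (landau_g n) \<le> n"
proof -
  have "landau_g n \<in> {M. M \<ge> 1 \<and> ell M \<le> n}"
    unfolding landau_g_def using finite_ell_le
    by (intro Max_in) (auto intro!: exI[of _ 1] simp: ell_def)
  thus "landau_g n \<ge> 1" "ell (landau_g n) \<le> n" by auto
qed

lemma le_landau_g: "M \<ge> 1 \<Longrightarrow> ell M \<le> n \<Longrightarrow> M \<le> landau_g n"
  unfolding landau_g_def using finite_ell_le by (intro Max_ge) auto

text \<open>The increase of \<open>ell M\<close> when \<open>M\<close> is multiplied by \<open>p\<close>, and its decrease when
  \<open>M\<close> is divided by \<open>p\<close> (for \<open>p | M\<close>).\<close>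

definition ell_rise :: "nat \<Rightarrow> nat \<Rightarrow> nat" where
  "ell_rise M p = (if multiplicity p M = 0 then p else p ^ multiplicity p M * (p - 1))"

definition ell_drop :: "nat \<Rightarrow> nat \<Rightarrow> nat" where
  "ell_drop M p = (if multiplicity p M = 1 then p else p ^ (multiplicity p M - 1) * (p - 1))"

definition exchange :: "nat \<Rightarrow> nat set \<Rightarrow> nat set \<Rightarrow> nat" where
  "exchange M D U = (\<Prod>p\<in>prime_factors M \<union> U.
     p ^ (multiplicity p M - of_bool (p \<in> D) + of_bool (p \<in> U)))"

lemma ell_exchange:
  assumes "finite U" "D \<inter> U = {}" "\<forall>p\<in>U. prime p" "D \<subseteq> prime_factors M"
  shows "ell (exchange M D U) + (\<Sum>p\<in>D. ell_drop M p) = ell M + (\<Sum>p\<in>U. ell_rise M p)"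
proof -
  define A where "A = prime_factors M \<union> U"
  define v where "v p = multiplicity p M" for p
  define f where "f p = v p - of_bool (p \<in> D) + of_bool (p \<in> U)" for p
  have A: "finite A" "\<forall>p\<in>A. prime p" "D \<subseteq> A" "U \<subseteq> A"
    using assms unfolding A_def by auto
  have pointwise: "ell_pow (f p) p + (if p \<in> D then ell_drop M p else 0)
      = ell_pow (v p) p + (if p \<in> U then ell_rise M p else 0)" if "p \<in> A" for p
  proof -
    have p1: "p \<ge> 1" using A(2) that prime_gt_0_nat by (auto simp: Suc_le_eq)
    consider "p \<in> D" | "p \<in> U" | "p \<notin> D" "p \<notin> U" by blast
    thus ?thesis
    proof cases
      case 1
      hence "v p = Suc (f p)" "p \<notin> U"
        using assms(2,4) by (auto simp: f_def v_def prime_factors_multiplicity)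
      thus ?thesis using 1 ell_pow_Suc[OF p1, of "f p"] by (simp add: ell_drop_def v_def)
    next
      case 2
      hence "f p = Suc (v p)" "p \<notin> D" using assms(2) by (auto simp: f_def)
      thus ?thesis using 2 ell_pow_Suc[OF p1, of "v p"] by (simp add: ell_rise_def v_def)
    qed (simp add: f_def)
  qed
  have "ell (exchange M D U) = (\<Sum>p\<in>A. ell_pow (f p) p)"
    unfolding exchange_def A_def[symmetric] f_def v_def using A by (intro ell_prod_prime_powers)
  moreover have "ell M = (\<Sum>p\<in>A. ell_pow (v p) p)"
    unfolding v_def using A by (intro ell_as_sum_ell_pow) (auto simp: A_def)
  moreover have "(\<Sum>p\<in>A. ell_pow (f p) p + (if p \<in> D then ell_drop M p else 0))
      = (\<Sum>p\<in>A. ell_pow (v p) p + (if p \<in> U then ell_rise M p else 0))"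
    using pointwise by (rule sum.cong[OF refl])
  ultimately show ?thesis
    using A by (simp add: sum.distrib sum.If_cases Int_absorb1 Int_absorb2 inf_commute)
qed

lemma exchange_mult:
  assumes "M \<ge> 1" "finite U" "\<forall>p\<in>U. prime p" "D \<subseteq> prime_factors M"
  shows "exchange M D U * \<Prod>D = M * \<Prod>U"
proof -
  define A where "A = prime_factors M \<union> U"
  define v where "v p = multiplicity p M" for p
  have A: "finite A" "D \<subseteq> A" "U \<subseteq> A" using assms unfolding A_def by auto
  have pointwise: "p ^ (v p - of_bool (p \<in> D) + of_bool (p \<in> U)) * (if p \<in> D then p else 1)
      = p ^ v p * (if p \<in> U then p else 1)" for p
  proof (cases "p \<in> D")
    case True
    then obtain k where "v p = Suc k"
      using assms(4) by (auto simp: v_def prime_factors_multiplicity gr0_conv_Suc)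
    thus ?thesis using True by (cases "p \<in> U") auto
  qed auto
  have "M = (\<Prod>p\<in>A. p ^ v p)"
  proof -
    have "M = (\<Prod>p\<in>prime_factors M. p ^ v p)"
      unfolding v_def using assms(1) prime_factorization_nat by auto
    also have "\<dots> = (\<Prod>p\<in>A. p ^ v p)"
      using A assms(3) by (intro prod.mono_neutral_left)
        (auto simp: A_def v_def prime_factors_multiplicity)
    finally show ?thesis .
  qed
  moreover have "(\<Prod>p\<in>A. p ^ (v p - of_bool (p \<in> D) + of_bool (p \<in> U)) * (if p \<in> D then p else 1))
      = (\<Prod>p\<in>A. p ^ v p * (if p \<in> U then p else 1))"
    using pointwise by simp
  ultimately show ?thesis
    unfolding exchange_def A_def[symmetric] v_def[symmetric] using A
    by (simp add: prod.distrib prod.If_cases Int_absorb1 Int_absorb2 inf_commute)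
qed

lemma landau_g_exchange:
  assumes "finite D" "finite U" "D \<inter> U = {}" "\<forall>p\<in>U. prime p" "D \<subseteq> prime_factors (landau_g n)"
    and budget: "ell (landau_g n) + (\<Sum>p\<in>U. ell_rise (landau_g n) p) \<le> n + (\<Sum>p\<in>D. ell_drop (landau_g n) p)"
    and bigger: "\<Prod>D < \<Prod>U"
  shows False
proof -
  define N where "N = exchange (landau_g n) D U"
  have "ell N \<le> n"
    using ell_exchange[OF assms(2-5)] budget unfolding N_def by linarith
  moreover have "\<Prod>D > 0"
    using assms(5) by (auto intro!: prod_pos dest: in_prime_factors_imp_prime prime_gt_0_nat)
  hence "N * \<Prod>D > landau_g n * \<Prod>D"
    using exchange_mult[OF landau_g_ge_1 assms(2,4,5)] bigger landau_g_ge_1[of n]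
    unfolding N_def by simp
  hence "N > landau_g n" by simp
  ultimately show False
    using le_landau_g[of N n] landau_g_ge_1[of n] by linarith
qed

lemma ell_rise_new: "p \<notin> prime_factors M \<Longrightarrow> prime p \<Longrightarrow> ell_rise M p = p"
  by (simp add: ell_rise_def prime_factors_multiplicity)

lemma ell_rise_present: "p \<in> prime_factors M \<Longrightarrow> ell_rise M p = p ^ multiplicity p M * (p - 1)"
  by (simp add: ell_rise_def prime_factors_multiplicity)

lemma ell_drop_ge:
  assumes "p \<in> prime_factors M"
  shows "p \<le> ell_drop M p"
proof -
  have "p \<ge> 2" "multiplicity p M \<ge> 1"
    using assms prime_ge_2_nat by (auto simp: prime_factors_multiplicity)
  moreover have "p * 1 \<le> p ^ (multiplicity p M - 1) * (p - 1)" if "multiplicity p M \<ge> 2"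
    using that \<open>p \<ge> 2\<close> by (intro mult_mono) (auto intro: self_le_power)
  ultimately show ?thesis unfolding ell_drop_def by (cases "multiplicity p M \<ge> 2") auto
qed

lemma ell_drop_mult_ge:
  assumes "p \<in> prime_factors M"
  shows "p ^ multiplicity p M * (p - 1) \<le> ell_drop M p * p"
proof -
  obtain k where "multiplicity p M = Suc k"
    using assms by (auto simp: prime_factors_multiplicity gr0_conv_Suc)
  thus ?thesis unfolding ell_drop_def by (cases k) (auto simp: algebra_simps)
qed

lemma prime_power_le_double_ell_drop:
  assumes "p \<in> prime_factors M"
  shows "p ^ multiplicity p M \<le> 2 * ell_drop M p"
proof -
  have "p \<ge> 2" using assms prime_ge_2_nat by auto
  hence "p ^ multiplicity p M * p \<le> p ^ multiplicity p M * (p - 1) * 2" by simp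
  also have "\<dots> \<le> 2 * ell_drop M p * p" using ell_drop_mult_ge[OF assms] by simp
  finally show ?thesis using \<open>p \<ge> 2\<close> by simp
qed

text \<open>If all prime factors of \<open>g(n)\<close> are below \<open>r\<close>, then either \<open>r\<close> can be added within the
  budget, or \<open>r\<close> can replace the prime with the largest power, which exceeds \<open>2r\<close>.\<close>

lemma landau_g_has_large_prime_factor:
  assumes r: "prime r" and n: "n \<ge> 2*r*r + r"
  shows "\<exists>p\<in>prime_factors (landau_g n). r \<le> p"
proof (rule ccontr)
  define M where "M = landau_g n"
  assume "\<not> ?thesis"
  hence small: "\<forall>p\<in>prime_factors M. p < r" unfolding M_def by auto
  hence r_new: "r \<notin> prime_factors M" by auto
  show False
  proof (cases "ell M + r \<le> n")
    case True
    show False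
      by (rule landau_g_exchange[of "{}" "{r}" n])
        (use True r r_new prime_gt_1_nat in \<open>auto simp: ell_rise_new M_def\<close>)
  next
    case False
    define m where "m = Max ((\<lambda>p. p ^ multiplicity p M) ` prime_factors M)"
    have "prime_factors M \<noteq> {}" using False n by (auto simp: ell_def)
    hence "m \<in> (\<lambda>p. p ^ multiplicity p M) ` prime_factors M" unfolding m_def by (intro Max_in) auto
    then obtain p where p: "p \<in> prime_factors M" "m = p ^ multiplicity p M" by blast
    have p_max: "\<forall>p'\<in>prime_factors M. p' ^ multiplicity p' M \<le> p ^ multiplicity p M"
      unfolding p(2)[symmetric] m_def by simp
    have "card (prime_factors M) \<le> r"
      using small card_mono[of "{..<r}" "prime_factors M"] by fastforce
    moreover have "ell M \<le> card (prime_factors M) * p ^ multiplicity p M"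
      unfolding ell_def using sum_bounded_above[of "prime_factors M", OF p_max[rule_format]] by simp
    ultimately have "ell M \<le> r * p ^ multiplicity p M"
      using mult_le_mono1 order_trans by blast
    hence "r * (2 * r) < r * p ^ multiplicity p M" using False n by linarith
    hence "2 * r < p ^ multiplicity p M" by simp
    hence "r \<le> ell_drop M p" using prime_power_le_double_ell_drop[OF p(1)] by linarith
    thus False
      using landau_g_exchange[of "{p}" "{r}" n] p r r_new small ell_landau_g_le[of n]
      by (auto simp: ell_rise_new M_def)
  qed
qed

lemma eventually_landau_g_Pplus_ge:
  "\<forall>\<^sub>F n in sequentially. prime_factors (landau_g n) \<noteq> {} \<and> R \<le> Pplus (landau_g n)"
proof -
  obtain r :: nat where r: "prime r" "r > R" using bigger_prime by blast
  have "prime_factors (landau_g n) \<noteq> {} \<and> R \<le> Pplus (landau_g n)" if n: "n \<ge> 2*r*r + r" for n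
  proof -
    obtain p where "p \<in> prime_factors (landau_g n)" "r \<le> p"
      using landau_g_has_large_prime_factor[OF r(1) n] by blast
    moreover have "p \<le> Pplus (landau_g n)"
      unfolding Pplus_def using calculation by (intro Max_ge) auto
    ultimately show ?thesis using r by auto
  qed
  thus ?thesis unfolding eventually_sequentially by blast
qed

section \<open>Chebyshev's function\<close>

definition primorial :: "nat \<Rightarrow> nat" where
  "primorial n = \<Prod>{p. prime p \<and> p \<le> n}"

lemma prod_primes_dvd:
  assumes "finite P" "\<forall>p\<in>P. prime p \<and> p dvd (N::nat)"
  shows "\<Prod>P dvd N"
  using assms
proof (induction P rule: finite_induct)
  case (insert p P)
  have "\<not> p dvd \<Prod>P"
  proof
    assume "p dvd \<Prod>P"
    then obtain r where "r \<in> P" "p dvd r" using insert prime_dvd_prod_iff[of P p id] by auto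
    thus False using insert by (auto dest: primes_dvd_imp_eq)
  qed
  hence "coprime p (\<Prod>P)" using insert by (intro prime_imp_coprime) auto
  thus ?case using insert by (simp add: divides_mult)
qed simp

lemma binomial_middle_odd_le: "(2*m+1) choose m \<le> 4 ^ m"
proof -
  have "((2*m+1) choose m) + ((2*m+1) choose (m+1)) = (\<Sum>k\<in>{m, m+1}. (2*m+1) choose k)" by simp
  also have "\<dots> \<le> (\<Sum>k\<le>2*m+1. (2*m+1) choose k)"
    by (intro sum_mono2) auto
  also have "\<dots> = 2 * 4 ^ m" by (simp only: choose_row_sum power_add power_mult) simp
  finally show ?thesis using binomial_symmetric[of m "2*m+1"] by simp
qed

lemma prod_primes_between_dvd_binomial:
  "\<Prod>{p. prime p \<and> m+1 < p \<and> p \<le> 2*m+1} dvd ((2*m+1) choose m)"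
proof (rule prod_primes_dvd)
  show "\<forall>p\<in>{p. prime p \<and> m+1 < p \<and> p \<le> 2*m+1}. prime p \<and> p dvd ((2*m+1) choose m)"
  proof
    fix p assume p: "p \<in> {p. prime p \<and> m+1 < p \<and> p \<le> 2*m+1}"
    have "fact m * fact (m+1) * ((2*m+1) choose m) = (fact (2*m+1) :: nat)"
      using binomial_fact_lemma[of m "2*m+1"] by (simp add: algebra_simps)
    moreover have "p dvd (fact (2*m+1) :: nat)" using p by (subst prime_dvd_fact_iff) auto
    ultimately have "p dvd fact m * fact (m+1) * ((2*m+1) choose m)" by simp
    moreover have "\<not> p dvd (fact m :: nat)" using p by (subst prime_dvd_fact_iff) auto
    moreover have "\<not> p dvd (fact (m+1) :: nat)" using p by (subst prime_dvd_fact_iff) auto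
    ultimately show "prime p \<and> p dvd ((2*m+1) choose m)"
      using p by (auto simp: prime_dvd_mult_iff)
  qed
qed auto

lemma primorial_odd_le: "primorial (2*m+1) \<le> primorial (m+1) * 4 ^ m"
proof -
  have "{p. prime p \<and> p \<le> 2*m+1} = {p. prime p \<and> p \<le> m+1} \<union> {p. prime p \<and> m+1 < p \<and> p \<le> 2*m+1}"
    by auto
  hence "primorial (2*m+1) = primorial (m+1) * \<Prod>{p. prime p \<and> m+1 < p \<and> p \<le> 2*m+1}"
    unfolding primorial_def by (subst prod.union_disjoint[symmetric]) auto
  moreover have "\<Prod>{p. prime p \<and> m+1 < p \<and> p \<le> 2*m+1} \<le> (2*m+1) choose m"
    using prod_primes_between_dvd_binomial by (intro dvd_imp_le) auto
  ultimately show ?thesis using binomial_middle_odd_le[of m] by simp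
qed

lemma primorial_le_4_pow: "primorial n \<le> 4 ^ n"
proof (induction n rule: less_induct)
  case (less n)
  consider "n < 2" | "n = 2" | "n > 2" "even n" | "n > 2" "odd n" by linarith
  thus ?case
  proof cases
    case 1
    hence "{p::nat. prime p \<and> p \<le> n} = {}" by (auto dest: prime_gt_1_nat)
    thus ?thesis unfolding primorial_def by (simp only: prod.empty) simp
  next
    case 2
    hence "{p::nat. prime p \<and> p \<le> n} = {2}" by (auto dest: prime_gt_1_nat)
    thus ?thesis unfolding primorial_def using 2 by simp
  next
    case 3
    hence "\<not> prime n" using prime_odd_nat by auto
    have "{p::nat. prime p \<and> p \<le> n} = {p. prime p \<and> p \<le> n - 1}"
    proof (rule set_eqI)
      fix p show "p \<in> {p::nat. prime p \<and> p \<le> n} \<longleftrightarrow> p \<in> {p. prime p \<and> p \<le> n - 1}"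
        using \<open>\<not> prime n\<close> by (cases "p = n") auto
    qed
    hence "primorial n = primorial (n - 1)" unfolding primorial_def by simp
    also have "\<dots> \<le> 4 ^ (n - 1)" using less 3 by simp
    also have "\<dots> \<le> 4 ^ n" by (intro power_increasing) auto
    finally show ?thesis .
  next
    case 4
    then obtain m where m: "n = 2*m+1" by (auto elim: oddE)
    with 4 have "m \<ge> 1" by simp
    have "primorial n \<le> primorial (m+1) * 4 ^ m" unfolding m by (rule primorial_odd_le)
    also have "\<dots> \<le> 4 ^ (m+1) * 4 ^ m"
      using less m \<open>m \<ge> 1\<close> by (intro mult_right_mono) (simp_all del: power_Suc)
    also have "\<dots> = 4 ^ n" using m by (simp add: power_add[symmetric])
    finally show ?thesis .
  qed
qed

lemma finite_primes_le: "finite {p::nat. prime p \<and> real p \<le> x}"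
  by (rule finite_subset[of _ "{..nat \<lceil>x\<rceil>}"]) (auto simp: le_nat_iff ceiling_le_iff le_ceiling_iff)

lemma cheb_theta_nonneg: "cheb_theta x \<ge> 0"
  unfolding cheb_theta_def by (intro sum_nonneg) (auto dest: prime_gt_1_nat)

lemma cheb_theta_mono: "x \<le> y \<Longrightarrow> cheb_theta x \<le> cheb_theta y"
  unfolding cheb_theta_def by (intro sum_mono2 finite_primes_le) (auto dest: prime_gt_1_nat)

lemma cheb_theta_eq_ln_primorial:
  assumes "x \<ge> 0"
  shows "cheb_theta x = ln (real (primorial (nat \<lfloor>x\<rfloor>)))"
proof -
  have "{p::nat. prime p \<and> real p \<le> x} = {p. prime p \<and> p \<le> nat \<lfloor>x\<rfloor>}"
    using assms by (auto simp: le_nat_iff le_floor_iff)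
  hence "cheb_theta x = (\<Sum>p\<in>{p. prime p \<and> p \<le> nat \<lfloor>x\<rfloor>}. ln (real p))"
    unfolding cheb_theta_def by simp
  also have "\<dots> = ln (\<Prod>p\<in>{p. prime p \<and> p \<le> nat \<lfloor>x\<rfloor>}. real p)"
    by (subst ln_prod) (auto dest: prime_gt_0_nat)
  finally show ?thesis unfolding primorial_def by simp
qed

lemma cheb_theta_le: "x \<ge> 0 \<Longrightarrow> cheb_theta x \<le> 2 * x"
proof -
  assume x: "x \<ge> 0"
  have "real (primorial (nat \<lfloor>x\<rfloor>)) > 0"
    unfolding primorial_def by (auto intro!: prod_pos dest: prime_gt_0_nat)
  hence "cheb_theta x \<le> ln (4 ^ nat \<lfloor>x\<rfloor>)"
    unfolding cheb_theta_eq_ln_primorial[OF x] using primorial_le_4_pow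
    by (subst ln_le_cancel_iff) (auto simp del: of_nat_power simp: of_nat_power[symmetric])
  also have "\<dots> = real (nat \<lfloor>x\<rfloor>) * ln 4" by (simp add: ln_realpow)
  also have "\<dots> \<le> x * 2"
    using x ln_realpow[of 2 2] ln_2_less_1 by (intro mult_mono) auto
  finally show ?thesis by simp
qed

lemma multiplicity_le_self: "prime (p::nat) \<Longrightarrow> m > 0 \<Longrightarrow> multiplicity p m \<le> m"
proof -
  assume "prime p" "m > 0"
  hence "2 ^ multiplicity p m \<le> m"
    using multiplicity_dvd[of p m] prime_ge_2_nat[of p]
    by (meson dvd_imp_le order_trans power_mono zero_le_numeral)
  thus ?thesis using less_exp[of "multiplicity p m"] by linarith
qed

text \<open>Legendre's formula; summing up to any \<open>K \<ge> N\<close> covers all nonzero terms.\<close>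

lemma multiplicity_fact:
  assumes p: "prime (p::nat)"
  shows "N \<le> K \<Longrightarrow> multiplicity p (fact N :: nat) = (\<Sum>k\<in>{1..K}. N div p ^ k)"
proof (induction N)
  case (Suc N)
  define v where "v = multiplicity p (Suc N)"
  have "v \<le> K" using multiplicity_le_self[OF p, of "Suc N"] Suc.prems unfolding v_def by simp
  have "multiplicity p (fact (Suc N) :: nat) = multiplicity p (Suc N * fact N)" by (simp add: fact_Suc)
  also have "\<dots> = v + multiplicity p (fact N :: nat)"
    unfolding v_def using p by (intro prime_elem_multiplicity_mult_distrib) auto
  finally have "multiplicity p (fact (Suc N) :: nat) = v + multiplicity p (fact N :: nat)" .
  moreover have "(\<Sum>k\<in>{1..K}. of_bool (p ^ k dvd Suc N)) = v"
  proof -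
    have "\<not> is_unit p" using p not_prime_unit by blast
    hence "p ^ k dvd Suc N \<longleftrightarrow> k \<le> v" for k
      unfolding v_def by (rule power_dvd_iff_le_multiplicity[OF Suc_not_Zero])
    hence "(\<Sum>k\<in>{1..K}. of_bool (p ^ k dvd Suc N)) = (\<Sum>k\<in>{1..K}. of_bool (k \<le> v) :: nat)"
      by simp
    also have "{1..K} \<inter> {k. k \<le> v} = {1..v}" using \<open>v \<le> K\<close> by auto
    ultimately show ?thesis by (simp add: sum.If_cases)
  qed
  moreover have "Suc N div p ^ k = N div p ^ k + of_bool (p ^ k dvd Suc N)" for k
    using p by (simp add: div_Suc dvd_eq_mod_eq_0 prime_gt_0_nat)
  ultimately show ?case using Suc by (simp add: sum.distrib)
qed simp

lemma div_double_le: "(m::nat) > 0 \<Longrightarrow> (2*n) div m \<le> 2 * (n div m) + of_bool (m \<le> 2*n)"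
proof (cases "m \<le> 2*n")
  case True
  assume m: "m > 0"
  have "2*n = 2*(m * (n div m) + n mod m)" by simp
  also have "\<dots> = m * (2*(n div m)) + 2 * (n mod m)" by (simp only: distrib_left mult.left_commute[of 2 m])
  finally have "2*n = m * (2*(n div m)) + 2 * (n mod m)" .
  hence "(2*n) div m = 2*(n div m) + (2 * (n mod m)) div m" using m by simp
  moreover have "(2 * (n mod m)) div m < 2" using m by (simp add: div_less_iff_less_mult)
  ultimately show ?thesis using True by simp
qed simp

lemma prime_power_dvd_central_binomial_le:
  assumes p: "prime (p::nat)" and n: "n \<ge> 1"
  shows "p ^ multiplicity p ((2*n) choose n) \<le> 2*n"
proof -
  define C where "C = (2*n) choose n"
  define S where "S = {k\<in>{1..2*n}. p ^ k \<le> 2*n}"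
  have "fact n * fact n * C = (fact (2*n) :: nat)"
    unfolding C_def using binomial_fact_lemma[of n "2*n"] by simp
  hence "multiplicity p (fact (2*n) :: nat) = multiplicity p (fact n * fact n * C :: nat)" by simp
  also have "\<dots> = 2 * multiplicity p (fact n :: nat) + multiplicity p C"
    using p by (simp add: C_def prime_elem_multiplicity_mult_distrib)
  finally have "multiplicity p (fact (2*n) :: nat) = 2 * multiplicity p (fact n :: nat) + multiplicity p C" .
  moreover have "(\<Sum>k\<in>{1..2*n}. (2*n) div p ^ k) \<le> (\<Sum>k\<in>{1..2*n}. 2 * (n div p ^ k) + of_bool (p ^ k \<le> 2*n))"
    using p by (intro sum_mono div_double_le) (simp add: prime_gt_0_nat)
  moreover have "\<dots> = 2 * (\<Sum>k\<in>{1..2*n}. n div p ^ k) + card S"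
    unfolding S_def by (simp add: sum.distrib sum_distrib_left sum.If_cases Int_def)
  ultimately have "multiplicity p C \<le> card S"
    using multiplicity_fact[OF p, of n "2*n"] multiplicity_fact[OF p, of "2*n" "2*n"] by simp
  define K where "K = Max (insert 0 S)"
  have "S \<subseteq> {1..K}" unfolding K_def S_def by auto
  hence "card S \<le> K" using card_mono[of "{1..K}" S] by simp
  moreover have "p ^ K \<le> 2*n"
    using Max_in[of "insert 0 S"] n unfolding K_def S_def by auto
  moreover have "p ^ multiplicity p C \<le> p ^ K"
    using \<open>multiplicity p C \<le> card S\<close> \<open>card S \<le> K\<close> prime_gt_0_nat[OF p]
    by (intro power_increasing) auto
  ultimately show ?thesis unfolding C_def by linarith
qed

lemma ln_eq_sum_multiplicity:
  assumes "m > 0"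
  shows "ln (real m) = (\<Sum>p\<in>prime_factors m. multiplicity p m * ln (real p))"
proof -
  have "real m = real (\<Prod>p\<in>prime_factors m. p ^ multiplicity p m)"
    using prime_factorization_nat[OF assms] by simp
  also have "\<dots> = (\<Prod>p\<in>prime_factors m. real p ^ multiplicity p m)" by simp
  also have "ln \<dots> = (\<Sum>p\<in>prime_factors m. ln (real p ^ multiplicity p m))"
    by (subst ln_prod) (auto dest: in_prime_factors_imp_prime prime_gt_0_nat)
  finally show ?thesis
    by (auto simp: ln_realpow prime_gt_0_nat intro: sum.cong)
qed

lemma card_le_bound:
  assumes "finite X" "\<forall>p\<in>X. 1 \<le> p \<and> real p \<le> s" "s \<ge> 0"
  shows "real (card X) \<le> s"
proof -
  have "X \<subseteq> {1..nat \<lfloor>s\<rfloor>}" using assms by (auto simp: le_nat_iff le_floor_iff)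
  hence "card X \<le> nat \<lfloor>s\<rfloor>" using card_mono[of "{1..nat \<lfloor>s\<rfloor>}" X] by simp
  thus ?thesis using assms(3) by linarith
qed

lemma sum_ln_le_card_ln:
  assumes "\<forall>p\<in>X. 1 \<le> p \<and> real p \<le> x"
  shows "(\<Sum>p\<in>X. ln (real p)) \<le> card X * ln x"
proof -
  have "(\<Sum>p\<in>X. ln (real p)) \<le> (\<Sum>p\<in>X. ln x)"
    using assms by (intro sum_mono) auto
  thus ?thesis by simp
qed

lemma sum_ln_primes_le_cheb_theta:
  assumes "\<forall>p\<in>X. prime p \<and> real p \<le> x"
  shows "(\<Sum>p\<in>X. ln (real p)) \<le> cheb_theta x"
  unfolding cheb_theta_def using assms
  by (intro sum_mono2 finite_primes_le) (auto dest: prime_gt_1_nat)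

lemma multiplicity_mult_ln_le:
  assumes p: "p \<in> prime_factors m" and pow_le: "p ^ multiplicity p m \<le> N"
  shows "multiplicity p m * ln (real p) \<le> of_bool (p * p \<le> N) * ln (real N) + ln (real p)"
proof (cases "p * p \<le> N")
  case True
  have "prime p" using p by auto
  have "0 < p ^ multiplicity p m" using \<open>prime p\<close> prime_gt_0_nat by simp
  hence "0 < N" using pow_le by linarith
  hence "ln (real p ^ multiplicity p m) \<le> ln (real N)"
    using pow_le \<open>prime p\<close> prime_gt_0_nat by (subst ln_le_cancel_iff) (auto simp flip: of_nat_power)
  moreover have "ln (real p) \<ge> 0" using prime_ge_1_nat[OF \<open>prime p\<close>] by simp
  ultimately show ?thesis using True p by (simp add: ln_realpow prime_gt_0_nat)
next
  case False
  have "multiplicity p m \<le> 1"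
  proof (rule ccontr)
    assume "\<not> multiplicity p m \<le> 1"
    hence "p ^ 2 \<le> p ^ multiplicity p m" using p prime_ge_1_nat by (intro power_increasing) auto
    thus False using pow_le False by (simp add: power2_eq_square)
  qed
  moreover have "multiplicity p m \<ge> 1" using p by (auto simp: prime_factors_multiplicity)
  ultimately have "multiplicity p m = 1" by simp
  thus ?thesis using False by simp
qed

text \<open>Only primes \<open>p \<le> \<surd>(2n)\<close> can divide \<open>2n choose n\<close> more than once, and
  each prime power dividing it is at most \<open>2n\<close>.\<close>

lemma ln_central_binomial_le:
  assumes n: "n \<ge> 1"
  shows "ln (real ((2*n) choose n)) \<le> sqrt (2*n) * ln (2*n) + cheb_theta (2*n)"
proof -
  define C where "C = (2*n) choose n"
  define P where "P = prime_factors C"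
  have prime: "prime p" and pow_le: "p ^ multiplicity p C \<le> 2*n" and mult_pos: "multiplicity p C \<ge> 1"
    if "p \<in> P" for p
    using that prime_power_dvd_central_binomial_le[of p n] n
    by (auto simp: P_def C_def prime_factors_multiplicity Suc_le_eq)
  have p_le: "real p \<le> 2 * real n" if "p \<in> P" for p
  proof -
    have "p \<le> p ^ multiplicity p C"
      using that prime mult_pos by (intro self_le_power) (auto simp: prime_gt_0_nat Suc_le_eq)
    thus ?thesis using pow_le[OF that] by linarith
  qed
  have term_le: "multiplicity p C * ln (real p) \<le> of_bool (p * p \<le> 2*n) * ln (2*n) + ln (real p)"
    if "p \<in> P" for p
    using multiplicity_mult_ln_le[of p C "2*n"] that pow_le[OF that] unfolding P_def by simp
  have "ln (real C) = (\<Sum>p\<in>P. multiplicity p C * ln (real p))"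
    unfolding P_def by (rule ln_eq_sum_multiplicity) (simp add: C_def)
  also have "\<dots> \<le> (\<Sum>p\<in>P. of_bool (p * p \<le> 2*n) * ln (2*n) + ln (real p))"
    using term_le by (rule sum_mono)
  also have "\<dots> = card {p\<in>P. p * p \<le> 2*n} * ln (2*n) + (\<Sum>p\<in>P. ln (real p))"
    by (simp add: sum.distrib sum.If_cases Int_def P_def)
  also have "card {p\<in>P. p * p \<le> 2*n} * ln (2*n) \<le> sqrt (2*n) * ln (2*n)"
  proof (intro mult_right_mono card_le_bound)
    show "\<forall>p\<in>{p\<in>P. p * p \<le> 2*n}. 1 \<le> p \<and> real p \<le> sqrt (2*n)"
      using prime prime_ge_1_nat
      by (auto simp: real_le_rsqrt power2_eq_square simp flip: of_nat_mult)
  qed (use n in \<open>auto simp: P_def\<close>)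
  also have "(\<Sum>p\<in>P. ln (real p)) \<le> cheb_theta (2*n)"
    using prime p_le by (intro sum_ln_primes_le_cheb_theta) auto
  finally show ?thesis unfolding C_def by simp
qed

lemma cheb_theta_double_ge:
  fixes n :: nat
  assumes "n \<ge> 1"
  shows "cheb_theta (2 * real n) \<ge> n * ln 4 - ln (2 * real n) - sqrt (2 * real n) * ln (2 * real n)"
proof -
  have "ln (4^n / (2*real n)) \<le> ln (real ((2*n) choose n))"
    using central_binomial_lower_bound[of n] assms by simp
  moreover have "ln (4^n / (2*real n)) = n * ln 4 - ln (2 * real n)"
    using assms by (simp add: ln_div ln_realpow)
  ultimately show ?thesis using ln_central_binomial_le[OF assms] by linarith
qed

lemma eventually_cheb_theta_ge: "\<forall>\<^sub>F x in at_top. cheb_theta x \<ge> x / 4"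
proof -
  have "\<forall>\<^sub>F x in at_top. x/2 - 1 - ln x - sqrt x * ln x \<ge> x / 4"
    by real_asymp
  hence "\<forall>\<^sub>F x in at_top. x/2 - 1 - ln x - sqrt x * ln x \<ge> x / 4 \<and> x \<ge> 4"
    using eventually_ge_at_top by (rule eventually_conj)
  thus ?thesis
  proof (rule eventually_mono, safe)
    fix x :: real assume x: "x/2 - 1 - ln x - sqrt x * ln x \<ge> x / 4" "x \<ge> 4"
    define n where "n = nat \<lfloor>x/2\<rfloor>"
    have n: "n \<ge> 1" "2 * real n \<le> x" "2 * real n \<ge> x - 2"
      unfolding n_def using x(2) by (auto simp: le_nat_iff le_floor_iff) linarith+
    have "exp 1 \<le> (4::real)" using exp_le by simp
    hence "1 \<le> ln (4::real)" by (simp add: ln_ge_iff)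
    hence "n \<le> n * ln (4::real)" using mult_left_mono[of 1 "ln 4" "real n"] by simp
    moreover have "ln (2 * real n) \<le> ln x" using n by simp
    moreover have "sqrt (2 * real n) * ln (2 * real n) \<le> sqrt x * ln x"
      using n by (intro mult_mono) auto
    moreover have "cheb_theta (2 * real n) \<le> cheb_theta x" using n by (intro cheb_theta_mono)
    ultimately show "cheb_theta x \<ge> x / 4"
      using cheb_theta_double_ge[OF n(1)] n x(1) by linarith
  qed
qed

lemma sum_ln_primes_between:
  assumes "m \<ge> 1" "real m - 1 \<le> x"
  shows "(\<Sum>p\<in>{p. prime p \<and> m \<le> p \<and> real p \<le> x}. ln (real p)) = cheb_theta x - cheb_theta (real m - 1)"
proof -
  have "{p::nat. prime p \<and> real p \<le> x}
      = {p. prime p \<and> real p \<le> real m - 1} \<union> {p. prime p \<and> m \<le> p \<and> real p \<le> x}"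
    using assms by (auto simp: of_nat_diff[symmetric] simp del: of_nat_diff)
  moreover have "finite {p::nat. prime p \<and> m \<le> p \<and> real p \<le> x}"
    by (rule finite_subset[OF _ finite_primes_le[of x]]) auto
  ultimately have "cheb_theta x
      = cheb_theta (real m - 1) + (\<Sum>p\<in>{p. prime p \<and> m \<le> p \<and> real p \<le> x}. ln (real p))"
    unfolding cheb_theta_def using assms(1) finite_primes_le
    by (simp only:) (rule sum.union_disjoint, auto)
  thus ?thesis by simp
qed

lemma prime_bracket_interval:
  fixes X x y :: real
  assumes X: "X \<ge> 5" and x: "x \<ge> X" and xy: "x < y"
    and at_most_one: "\<And>a b. prime a \<Longrightarrow> prime b \<Longrightarrow> a < b \<Longrightarrow> x \<le> real a \<Longrightarrow> real b < y \<Longrightarrow> False"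
  obtains i where "i \<ge> 4" "real (pr (i - 3)) < x" "y \<le> real (pr i)"
proof -
  define E where "E = enumerate {p::nat. prime p}"
  have inf: "infinite {p::nat. prime p}" using primes_infinite by simp
  have E_prime: "prime (E k)" for k using enumerate_in_set[OF inf, of k] unfolding E_def by simp
  have E_less: "E a < E b \<longleftrightarrow> a < b" for a b unfolding E_def using inf by simp
  have pr_E: "pr (Suc k) = E k" for k unfolding pr_def E_def by simp
  define j where "j = (LEAST k. real (E k) \<ge> y)"
  have "\<exists>k. real (E k) \<ge> y"
  proof
    have "nat \<lceil>y\<rceil> \<le> E (nat \<lceil>y\<rceil>)" unfolding E_def by (rule le_enumerate[OF inf])
    thus "real (E (nat \<lceil>y\<rceil>)) \<ge> y" by linarith
  qed
  hence Ej: "real (E j) \<ge> y" unfolding j_def by (rule LeastI_ex)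
  have before_j: "real (E k) < y" if "k < j" for k
    using not_less_Least[of k "\<lambda>k. real (E k) \<ge> y"] that unfolding j_def by linarith
  obtain k3 where k3: "E k3 = 3" unfolding E_def using enumerate_Ex[OF inf, of 3] by auto
  obtain k5 where k5: "E k5 = 5" unfolding E_def using enumerate_Ex[OF inf, of 5] by auto
  have "E 0 = 2" unfolding E_def enumerate_0 by (rule Least_equality) (auto dest: prime_ge_2_nat)
  hence "k3 \<noteq> 0" using k3 by (cases "k3 = 0") auto
  moreover have "k3 < k5" using E_less[of k3 k5] k3 k5 by simp
  moreover have "k5 < j" using E_less[of k5 j] k5 Ej xy x X by simp
  ultimately have j3: "j \<ge> 3" by linarith
  have "real (E (j-2)) < x"
  proof (rule ccontr)
    assume "\<not> real (E (j-2)) < x"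
    moreover have "E (j-2) < E (j-1)" using E_less j3 by simp
    moreover have "real (E (j-1)) < y" by (rule before_j) (use j3 in simp)
    ultimately show False using at_most_one[OF E_prime E_prime, of "j-2" "j-1"] by (simp add: not_less)
  qed
  moreover have "E (j-3) < E (j-2)" using E_less j3 by simp
  moreover have "j + 1 - 3 = Suc (j - 3)" using j3 by simp
  ultimately show thesis
    using that[of "j+1"] j3 Ej pr_E[of j] pr_E[of "j-3"] by simp
qed

text \<open>At most one prime in \<open>[x, y)\<close> means \<open>p\<^sub>i\<^sub>-\<^sub>3 < x < y \<le> p\<^sub>i\<close> for some \<open>i\<close>, and
  \<open>\<eta>\<^sub>3(X) \<le> p\<^sub>i\<^sub>-\<^sub>3 / p\<^sub>i\<close> then bounds the length of the interval.\<close>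

lemma interval_le_eta3:
  fixes X x y :: real
  assumes X: "X \<ge> 5" and x: "x \<ge> X" and xy: "x < y" and eta: "eta3 X > 0"
    and at_most_one: "\<And>a b. prime a \<Longrightarrow> prime b \<Longrightarrow> a < b \<Longrightarrow> x \<le> real a \<Longrightarrow> real b < y \<Longrightarrow> False"
  shows "y - x \<le> (1 - eta3 X) * x / eta3 X"
proof -
  obtain i where i: "i \<ge> 4" "real (pr (i - 3)) < x" "y \<le> real (pr i)"
    by (rule prime_bracket_interval[OF X x xy at_most_one])
  define a where "a = real (pr (i - 3))"
  define b where "b = real (pr i)"
  define \<eta> where "\<eta> = eta3 X"
  have b0: "b > 0" using i x xy X unfolding b_def by linarith
  have "\<eta> \<le> a / b"
  proof -
    have "a / b \<in> {real (pr (i - 3)) / real (pr i) | i. i \<ge> 4 \<and> real (pr i) > X}"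
      using i x xy unfolding a_def b_def by (intro CollectI exI[of _ i]) auto
    moreover have "bdd_below {real (pr (i - 3)) / real (pr i) | i. i \<ge> 4 \<and> real (pr i) > X}"
      by (rule bdd_belowI[of _ 0]) auto
    ultimately show ?thesis unfolding \<eta>_def eta3_def by (rule cInf_lower)
  qed
  hence eta_b: "\<eta> * b \<le> a" using b0 by (simp add: pos_le_divide_eq)
  have "a < b" using i xy unfolding a_def b_def by linarith
  hence "\<eta> < 1" using \<open>\<eta> \<le> a/b\<close> b0 by (simp add: divide_less_eq le_less_trans)
  have "y - x < b - a" using i unfolding a_def b_def by linarith
  also have "\<dots> \<le> (1 - \<eta>) * b" using eta_b by (simp add: algebra_simps)
  also have "\<dots> \<le> (1 - \<eta>) * (x / \<eta>)"
    using eta_b i(2) eta \<open>\<eta> < 1\<close> unfolding a_def \<eta>_def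
    by (intro mult_left_mono) (auto simp: le_divide_eq mult.commute)
  finally show ?thesis unfolding \<eta>_def by simp
qed

section \<open>The primes missing from \<open>g(n)\<close>\<close>

locale landau_index =
  fixes n :: nat
  assumes prime_factors_nonempty: "prime_factors (landau_g n) \<noteq> {}"
begin

abbreviation M :: nat where "M \<equiv> landau_g n"
abbreviation q :: nat where "q \<equiv> Pplus M"
abbreviation Q :: real where "Q \<equiv> real q"

lemma q_in_prime_factors: "q \<in> prime_factors M"
  unfolding Pplus_def using prime_factors_nonempty by (intro Max_in) auto

lemma Q_ge_2: "Q \<ge> 2"
  using q_in_prime_factors prime_ge_2_nat by fastforce

text \<open>Instances of \<open>landau_g_exchange\<close>: \<open>q\<close> (possibly with a second prime factor \<open>t\<close>)
  is traded for primes not dividing \<open>g(n)\<close>, or a set \<open>T\<close> of prime factors for a new prime \<open>p\<close>.\<close>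

lemma two_new_primes_product_le:
  assumes "prime u" "prime v" "u \<notin> prime_factors M" "v \<notin> prime_factors M" "u \<noteq> v" "u + v \<le> q"
  shows "u * v \<le> q"
proof (rule ccontr)
  assume "\<not> u * v \<le> q"
  thus False
    using landau_g_exchange[of "{q}" "{u, v}" n] assms q_in_prime_factors
      ell_drop_ge[OF q_in_prime_factors] ell_landau_g_le[of n]
    by (auto simp: ell_rise_new)
qed

lemma new_prime_and_raise_product_le:
  assumes "prime p" "p \<notin> prime_factors M" "r \<in> prime_factors M" "r \<noteq> q"
    and "p + r ^ multiplicity r M * (r - 1) \<le> q"
  shows "p * r \<le> q"
proof (rule ccontr)
  assume "\<not> p * r \<le> q"
  moreover have "p \<noteq> r" using assms by auto
  ultimately show False
    using landau_g_exchange[of "{q}" "{p, r}" n] assms q_in_prime_factors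
      ell_drop_ge[OF q_in_prime_factors] ell_landau_g_le[of n]
    by (auto simp: ell_rise_new ell_rise_present)
qed

lemma two_new_primes_product_le_mult:
  assumes "prime u" "prime v" "u \<notin> prime_factors M" "v \<notin> prime_factors M" "u \<noteq> v"
    and "t \<in> prime_factors M" "t \<noteq> q" "u + v \<le> q + t"
  shows "u * v \<le> q * t"
proof (rule ccontr)
  assume "\<not> u * v \<le> q * t"
  thus False
    using landau_g_exchange[of "{q, t}" "{u, v}" n] assms q_in_prime_factors
      ell_drop_ge[OF q_in_prime_factors] ell_drop_ge[OF assms(6)] ell_landau_g_le[of n]
    by (auto simp: ell_rise_new)
qed

lemma new_prime_le_prod:
  assumes "prime p" "p \<notin> prime_factors M" "finite T" "T \<subseteq> prime_factors M"
    and "p \<le> (\<Sum>r\<in>T. ell_drop M r)"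
  shows "p \<le> \<Prod>T"
proof (rule ccontr)
  assume "\<not> p \<le> \<Prod>T"
  thus False
    using landau_g_exchange[of T "{p}" n] assms ell_landau_g_le[of n]
    by (auto simp: ell_rise_new)
qed

definition missing :: "nat set" where
  "missing = {p. prime p \<and> p < q \<and> p \<notin> prime_factors M}"

lemma missing_iff: "p \<in> missing \<longleftrightarrow> prime p \<and> p < q \<and> p \<notin> prime_factors M"
  unfolding missing_def by simp

lemma finite_missing: "finite missing"
  unfolding missing_def by auto

lemma ln_landau_g_ge_theta:
  assumes "y \<le> Q"
  shows "ln (real M) \<ge> cheb_theta y - (\<Sum>p\<in>{p\<in>missing. real p \<le> y}. ln (real p))"
proof -
  define Y where "Y = {p\<in>missing. real p \<le> y}"
  have "finite Y" unfolding Y_def using finite_missing by simp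
  have "cheb_theta y \<le> (\<Sum>p\<in>prime_factors M \<union> Y. ln (real p))"
    unfolding cheb_theta_def
  proof (rule sum_mono2)
    show "{p. prime p \<and> real p \<le> y} \<subseteq> prime_factors M \<union> Y"
      using assms q_in_prime_factors
      by (auto simp: Y_def missing_iff nat_less_le of_nat_le_iff[symmetric] simp del: of_nat_le_iff)
    fix b assume "b \<in> prime_factors M \<union> Y - {p. prime p \<and> real p \<le> y}"
    hence "prime b" by (auto simp: Y_def missing_iff)
    thus "0 \<le> ln (real b)" using prime_ge_1_nat by simp
  qed (use \<open>finite Y\<close> in simp)
  also have "\<dots> = (\<Sum>p\<in>prime_factors M. ln (real p)) + (\<Sum>p\<in>Y. ln (real p))"
    using \<open>finite Y\<close> by (intro sum.union_disjoint) (auto simp: Y_def missing_iff)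
  also have "(\<Sum>p\<in>prime_factors M. ln (real p)) \<le> ln (real M)"
  proof -
    have "(\<Sum>p\<in>prime_factors M. ln (real p)) \<le> (\<Sum>p\<in>prime_factors M. multiplicity p M * ln (real p))"
    proof (intro sum_mono)
      fix p assume "p \<in> prime_factors M"
      hence "1 \<le> real (multiplicity p M)" "0 \<le> ln (real p)"
        using prime_ge_1_nat by (auto simp: prime_factors_multiplicity Suc_le_eq)
      thus "ln (real p) \<le> multiplicity p M * ln (real p)"
        using mult_right_mono[of 1 "real (multiplicity p M)" "ln (real p)"] by simp
    qed
    thus ?thesis using ln_eq_sum_multiplicity[of M] landau_g_ge_1[of n] by simp
  qed
  finally show ?thesis unfolding Y_def by linarith
qed

lemma ln_landau_g_ge_theta_missing: "ln (real M) \<ge> cheb_theta Q - (\<Sum>p\<in>missing. ln (real p))"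
proof -
  have "{p\<in>missing. real p \<le> Q} = missing" by (auto simp: missing_iff)
  thus ?thesis using ln_landau_g_ge_theta[of Q] by simp
qed

lemma eps1_bounds:
  assumes "y \<ge> Q/2"
  shows "\<bar>cheb_theta y / y - 1\<bar> \<le> eps1 n"
proof -
  define A where "A = {\<bar>cheb_theta x / x - 1\<bar> | x. x \<ge> Q/2}"
  have "bdd_above A"
  proof (rule bdd_aboveI)
    fix z assume "z \<in> A"
    then obtain x where z: "z = \<bar>cheb_theta x / x - 1\<bar>" and x: "x \<ge> Q/2" unfolding A_def by auto
    hence "x > 0" using Q_ge_2 by simp
    hence "cheb_theta x / x \<ge> 0" "cheb_theta x / x \<le> 2"
      using cheb_theta_nonneg[of x] cheb_theta_le[of x] by (auto simp: divide_le_eq)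
    thus "z \<le> 1" unfolding z by linarith
  qed
  moreover have "\<bar>cheb_theta y / y - 1\<bar> \<in> A" unfolding A_def using assms by auto
  ultimately show ?thesis unfolding eps1_def A_def Let_def by (rule cSup_upper[rotated])
qed

lemma eps1_nonneg: "eps1 n \<ge> 0"
  using eps1_bounds[of Q] by linarith

lemma cheb_theta_ge_eps1: "y \<ge> Q/2 \<Longrightarrow> cheb_theta y \<ge> y * (1 - eps1 n)"
  and cheb_theta_le_eps1: "y \<ge> Q/2 \<Longrightarrow> cheb_theta y \<le> y * (1 + eps1 n)"
proof -
  assume y: "y \<ge> Q/2"
  hence "y > 0" using Q_ge_2 by simp
  thus "cheb_theta y \<ge> y * (1 - eps1 n)" "cheb_theta y \<le> y * (1 + eps1 n)"
    using eps1_bounds[OF y] by (auto simp: abs_le_iff field_simps)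
qed

lemma eps2_ge_eta3: "1 - eta3 (Q/4) \<le> eps2 n"
  unfolding eps2_def Let_def by simp

lemma eps2_nonneg: "eps2 n \<ge> 0"
  unfolding eps2_def Let_def by (simp add: le_max_iff_disj)

lemma ln_div_sqrt_le_sqrt_eps2: "ln Q / sqrt Q \<le> sqrt (eps2 n)"
proof -
  have "sqrt ((ln Q / sqrt Q)^2) \<le> sqrt (eps2 n)"
    unfolding eps2_def Let_def by (intro real_sqrt_le_mono) simp
  moreover have "ln Q \<ge> 0" using Q_ge_2 by simp
  ultimately show ?thesis by simp
qed

lemma missing_between_unique:
  assumes "a \<in> missing" "b \<in> missing" "sqrt Q < real a" "sqrt Q < real b" "real a \<le> Q/2" "real b \<le> Q/2"
  shows "a = b"
proof (rule ccontr)
  assume "a \<noteq> b"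
  have "0 < real a" using assms(3) real_sqrt_ge_zero[of Q] by linarith
  hence "sqrt Q * sqrt Q < real a * real b"
    using assms(3,4) by (intro mult_strict_mono) auto
  hence "q < a * b" by (simp flip: of_nat_mult)
  moreover have "a + b \<le> q" using assms(5,6) by linarith
  ultimately show False
    using two_new_primes_product_le[of a b] assms(1,2) \<open>a \<noteq> b\<close> by (auto simp: missing_iff)
qed

lemma sqrt_le_quarter: "Q \<ge> 16 \<Longrightarrow> sqrt Q \<le> Q/4"
proof -
  assume Q: "Q \<ge> 16"
  hence "4 \<le> sqrt Q" using real_sqrt_le_mono[of 16 Q] by simp
  hence "4 * sqrt Q \<le> sqrt Q * sqrt Q" by (intro mult_right_mono) auto
  thus ?thesis using Q by simp
qed

text \<open>Below \<open>\<surd>q\<close> there are at most \<open>\<surd>q\<close> missing primes, and between \<open>\<surd>q\<close> and \<open>q/2\<close> at most one.\<close>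

lemma sum_ln_missing_le_half:
  assumes "Q \<ge> 16"
  shows "(\<Sum>p\<in>{p\<in>missing. real p \<le> Q/2}. ln (real p)) \<le> (sqrt Q + 1) * ln Q"
proof -
  define Y1 where "Y1 = {p\<in>missing. real p \<le> sqrt Q}"
  define Y2 where "Y2 = {p\<in>missing. sqrt Q < real p \<and> real p \<le> Q/2}"
  have fin: "finite Y1" "finite Y2" unfolding Y1_def Y2_def using finite_missing by auto
  have ge_1: "1 \<le> p" if "p \<in> missing" for p
    using that prime_ge_1_nat by (auto simp: missing_iff)
  have "{p\<in>missing. real p \<le> Q/2} = Y1 \<union> Y2"
    unfolding Y1_def Y2_def using sqrt_le_quarter[OF assms] by auto
  hence "(\<Sum>p\<in>{p\<in>missing. real p \<le> Q/2}. ln (real p)) = (\<Sum>p\<in>Y1. ln (real p)) + (\<Sum>p\<in>Y2. ln (real p))"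
    using fin by (simp add: sum.union_disjoint Y1_def Y2_def disjoint_iff)
  also have "(\<Sum>p\<in>Y1. ln (real p)) \<le> sqrt Q * ln Q"
  proof -
    have "real (card Y1) \<le> sqrt Q"
      using fin ge_1 by (intro card_le_bound) (auto simp: Y1_def)
    moreover have "(\<Sum>p\<in>Y1. ln (real p)) \<le> card Y1 * ln Q"
      using ge_1 sqrt_le_quarter[OF assms] by (intro sum_ln_le_card_ln) (auto simp: Y1_def)
    moreover have "ln Q \<ge> 0" using assms by simp
    ultimately show ?thesis by (meson mult_right_mono order_trans)
  qed
  also have "(\<Sum>p\<in>Y2. ln (real p)) \<le> ln Q"
  proof -
    have "card Y2 \<le> 1"
      using fin(2) missing_between_unique by (auto simp: card_le_Suc0_iff_eq Y2_def)
    moreover have "(\<Sum>p\<in>Y2. ln (real p)) \<le> card Y2 * ln Q"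
      using ge_1 by (intro sum_ln_le_card_ln) (auto simp: Y2_def)
    moreover have "ln Q \<ge> 0" using assms by simp
    ultimately show ?thesis
      using mult_right_mono[of "real (card Y2)" 1 "ln Q"] by simp
  qed
  finally show ?thesis by (simp add: algebra_simps)
qed

lemma missing_above_half_near_q:
  assumes "Q \<ge> 16" "s \<in> missing" "real s \<le> sqrt Q" "p \<in> missing" "real p > Q/2"
  shows "q < p + s"
proof (rule ccontr)
  assume "\<not> q < p + s"
  moreover have "s \<ge> 2" "s \<noteq> p" 
    using assms sqrt_le_quarter[OF assms(1)] prime_ge_2_nat by (auto simp: missing_iff)
  moreover have "q < s * p"
  proof -
    have "Q < 2 * real p" using assms(5) by simp
    also have "\<dots> \<le> real s * real p" using \<open>s \<ge> 2\<close> by (intro mult_right_mono) auto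
    finally show ?thesis by (simp flip: of_nat_mult)
  qed
  ultimately show False
    using two_new_primes_product_le[of s p] assms(2,4) by (auto simp: missing_iff)
qed

lemma sqrt_mult_ln_le: "sqrt Q * ln Q \<le> Q * sqrt (eps2 n)"
proof -
  have "sqrt Q * ln Q = (Q / sqrt Q) * ln Q" by (simp add: real_div_sqrt)
  also have "\<dots> = Q * (ln Q / sqrt Q)" by simp
  also have "\<dots> \<le> Q * sqrt (eps2 n)"
    using ln_div_sqrt_le_sqrt_eps2 by (intro mult_left_mono) auto
  finally show ?thesis .
qed

text \<open>A prime \<open>t\<close> of the window dividing \<open>g(n)\<close> could be traded, together with \<open>q\<close>, for \<open>p\<^sub>1 p\<^sub>2\<close>.\<close>

lemma prime_in_window_missing:
  assumes "p1 \<in> missing" "p2 \<in> missing" "p1 < p2" "prime t"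
    and "real p1 + real p2 - Q \<le> real t" "real t < real p1 * real p2 / Q"
  shows "t < p1" and "t \<in> missing"
proof -
  have "real p1 * real p2 < real p1 * Q"
    using assms(1-3) by (intro mult_strict_left_mono) (auto simp: missing_iff prime_gt_0_nat)
  hence "real p1 * real p2 / Q < real p1" using Q_ge_2 by (simp add: pos_divide_less_eq)
  hence "real t < real p1" using assms(6) by linarith
  thus "t < p1" by simp
  hence "t < q" using assms(1) by (simp add: missing_iff)
  moreover have "t \<notin> prime_factors M"
  proof
    assume t: "t \<in> prime_factors M"
    have "p1 + p2 \<le> q + t" using assms(5) by linarith
    hence "p1 * p2 \<le> q * t"
      using two_new_primes_product_le_mult[OF _ _ _ _ _ t] assms(1-3) \<open>t < q\<close>
      by (auto simp: missing_iff)
    hence "real p1 * real p2 \<le> Q * real t" by (simp flip: of_nat_mult)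
    thus False using assms(6) Q_ge_2 by (simp add: less_divide_eq mult.commute)
  qed
  ultimately show "t \<in> missing" using assms(4) by (simp add: missing_iff)
qed

lemma missing_above_half_ell_drop:
  assumes "p \<in> missing" "real p > Q/2" "r \<in> prime_factors M" "r \<noteq> q"
  shows "q - p < ell_drop M r * r"
proof -
  have "r \<ge> 2" using assms(3) prime_ge_2_nat by auto
  hence "real p * 2 \<le> real p * real r" by (intro mult_left_mono) auto
  hence "\<not> p * r \<le> q" using assms(2) by (simp flip: of_nat_mult)
  hence "\<not> p + r ^ multiplicity r M * (r - 1) \<le> q"
    using new_prime_and_raise_product_le[OF _ _ assms(3,4)] assms(1) by (auto simp: missing_iff)
  moreover have "p < q" using assms(1) by (simp add: missing_iff)
  ultimately have "q - p < r ^ multiplicity r M * (r - 1)" by linarith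
  thus ?thesis using ell_drop_mult_ge[OF assms(3)] by linarith
qed

definition missing_high :: "nat set" where
  "missing_high = {p\<in>missing. Q/2 < real p}"

lemma missing_high_iff: "p \<in> missing_high \<longleftrightarrow> p \<in> missing \<and> Q/2 < real p"
  unfolding missing_high_def by simp

lemma finite_missing_high: "finite missing_high"
  unfolding missing_high_def using finite_missing by simp

lemma sum_ln_missing_split:
  "(\<Sum>p\<in>missing. ln (real p))
     = (\<Sum>p\<in>{p\<in>missing. real p \<le> Q/2}. ln (real p)) + (\<Sum>p\<in>missing_high. ln (real p))"
  unfolding missing_high_def using finite_missing
  by (subst sum.union_disjoint[symmetric]) (auto intro: sum.cong)

lemma sum_ln_missing_high_le_if_small:
  assumes "Q \<ge> 16" "s \<in> missing" "real s \<le> sqrt Q"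
  shows "(\<Sum>p\<in>missing_high. ln (real p)) \<le> sqrt Q * ln Q"
proof -
  have "missing_high \<subseteq> {q - s..<q}"
  proof
    fix p assume "p \<in> missing_high"
    hence "q < p + s" "p < q"
      using missing_above_half_near_q[OF assms] by (auto simp: missing_high_iff missing_iff)
    thus "p \<in> {q - s..<q}" by simp
  qed
  hence "real (card missing_high) \<le> sqrt Q"
    using card_mono[of "{q - s..<q}" missing_high] assms(3) by simp
  moreover have "(\<Sum>p\<in>missing_high. ln (real p)) \<le> card missing_high * ln Q"
    using prime_ge_1_nat by (intro sum_ln_le_card_ln) (auto simp: missing_high_iff missing_iff)
  moreover have "ln Q \<ge> 0" using Q_ge_2 by simp
  ultimately show ?thesis by (meson mult_right_mono order_trans)
qed

end

section \<open>The estimate for large \<open>q\<close>\<close>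

definition sufficiently_large :: "real \<Rightarrow> bool" where
  "sufficiently_large Q \<longleftrightarrow> 4 * 10^21 \<le> Q \<and> (\<forall>x\<ge>5*Q/8. x/4 \<le> cheb_theta x)
     \<and> Q/8 \<le> Q/4 - (2 * sqrt Q + 1) * ln Q \<and> Q/8 \<le> 5*Q/32 - (sqrt Q + 1) * ln Q"

lemma eventually_sufficiently_large: "eventually sufficiently_large at_top"
proof -
  obtain X where X: "\<forall>x\<ge>X. x/4 \<le> cheb_theta x"
    using eventually_cheb_theta_ge unfolding eventually_at_top_linorder by blast
  have "\<forall>\<^sub>F Q in at_top. Q/8 \<le> Q/4 - (2 * sqrt Q + 1) * ln Q" by real_asymp
  moreover have "\<forall>\<^sub>F Q in at_top. Q/8 \<le> 5*Q/32 - (sqrt Q + 1) * ln Q" by real_asymp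
  moreover have "\<forall>\<^sub>F Q in at_top. max (4 * 10^21) (8 * X / 5) \<le> Q" by (rule eventually_ge_at_top)
  ultimately show ?thesis
    unfolding sufficiently_large_def by eventually_elim (use X in auto)
qed

locale landau_index_large = landau_index +
  assumes sufficiently_large: "sufficiently_large (real (Pplus (landau_g n)))"
begin

lemma Q_large: "Q \<ge> 4 * 10^21"
  using sufficiently_large unfolding sufficiently_large_def by simp

lemma cheb_theta_ge_quarter: "x \<ge> 5*Q/8 \<Longrightarrow> x/4 \<le> cheb_theta x"
  using sufficiently_large unfolding sufficiently_large_def by blast

lemma sqrt_ln_le_eighth: "(2 * sqrt Q + 1) * ln Q \<le> Q/8" "(sqrt Q + 1) * ln Q \<le> Q/32"
  using sufficiently_large unfolding sufficiently_large_def by auto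

lemma Q_ge_3481: "Q \<ge> 3481"
  using Q_large by simp

lemma sqrt_Q_ge_59: "sqrt Q \<ge> 59"
  using real_sqrt_le_mono[of "59^2" Q] Q_large by simp

lemma ln_Q_ge_1: "ln Q \<ge> 1"
  using exp_le Q_large by (simp add: ln_ge_iff)

text \<open>A missing prime \<open>p \<in> (q/2, 5q/8]\<close> would force every prime \<open>r \<le> 59\<close> to divide \<open>g(n)\<close> to
  a power exceeding \<open>(q - p)/r\<close>, hence \<open>\<Sum> ell_drop \<ge> (5/3)(q - p) \<ge> p\<close> over these \<open>r\<close>, whose
  product is \<open>< q/2 < p\<close>: trading them for \<open>p\<close> would enlarge \<open>g(n)\<close>.\<close>

lemma missing_above_half_gt:
  assumes no_small: "\<forall>s\<in>missing. sqrt Q < real s" and p: "p \<in> missing" "real p > Q/2"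
  shows "real p > 5 * Q / 8"
proof (rule ccontr)
  assume "\<not> real p > 5 * Q / 8"
  hence p_le: "real p \<le> 5 * Q / 8" by simp
  define T where "T = {2,3,5,7,11,13,17,19,23,29,31,37,41,43,47,53,59::nat}"
  have T_prime: "\<forall>r\<in>T. prime r" unfolding T_def by code_simp
  have T_recip: "(\<Sum>r\<in>T. 1 / real r) \<ge> 5/3" unfolding T_def by simp
  have T_prod: "\<Prod>T = 1922760350154212639070" unfolding T_def by simp
  have p_prime: "prime p" "p \<notin> prime_factors M" "p < q" using p by (auto simp: missing_iff)
  have T_factors: "r \<in> prime_factors M" and T_ne_q: "r \<noteq> q" if "r \<in> T" for r
  proof -
    have "real r \<le> 59" using that unfolding T_def by auto
    hence "real r \<le> sqrt Q" "real r < Q" using sqrt_Q_ge_59 Q_ge_3481 by linarith+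
    hence "r < q" by simp
    thus "r \<noteq> q" by simp
    have "r \<notin> missing" using no_small \<open>real r \<le> sqrt Q\<close> by fastforce
    thus "r \<in> prime_factors M" using T_prime that \<open>r < q\<close> by (auto simp: missing_iff)
  qed
  have drop_ge: "(Q - real p) / real r \<le> real (ell_drop M r)" if r: "r \<in> T" for r
  proof -
    have "r \<ge> 2" using T_prime r prime_ge_2_nat by blast
    have "q - p < ell_drop M r * r"
      using missing_above_half_ell_drop[OF p T_factors[OF r] T_ne_q[OF r]] .
    hence "Q - real p < real (ell_drop M r) * real r"
      using p_prime(3) by (simp add: of_nat_diff flip: of_nat_mult)
    thus ?thesis using \<open>r \<ge> 2\<close> by (simp add: divide_le_eq)
  qed
  have "real p \<le> (Q - real p) * (\<Sum>r\<in>T. 1 / real r)"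
    using T_recip p_le mult_left_mono[of "5/3" "\<Sum>r\<in>T. 1 / real r" "Q - real p"] by simp
  also have "\<dots> \<le> (\<Sum>r\<in>T. real (ell_drop M r))"
    unfolding sum_distrib_left using drop_ge by (intro sum_mono) simp
  finally have "p \<le> (\<Sum>r\<in>T. ell_drop M r)" by (simp flip: of_nat_sum)
  moreover have "finite T" "T \<subseteq> prime_factors M" using T_factors unfolding T_def by auto
  ultimately have "p \<le> \<Prod>T" using new_prime_le_prod[OF p_prime(1,2)] by blast
  thus False using T_prod p(2) Q_large by (simp flip: of_nat_le_iff)
qed

lemma prime_window_at_most_one:
  assumes no_small: "\<forall>s\<in>missing. sqrt Q < real s"
    and p1: "p1 \<in> missing_high" "\<forall>p\<in>missing_high. p1 \<le> p" and p2: "p2 \<in> missing_high" "p1 < p2"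
    and ab: "prime a" "prime b" "a < b" "real p1 + real p2 - Q \<le> real a" "real b < real p1 * real p2 / Q"
  shows False
proof -
  have window: "t \<in> missing" "t < p1" if "prime t" "real p1 + real p2 - Q \<le> real t"
      "real t < real p1 * real p2 / Q" for t
    using prime_in_window_missing[OF _ _ p2(2) that] p1 p2 by (auto simp: missing_high_iff)
  have "a \<in> missing" "b \<in> missing" "b < p1" using window ab by auto
  moreover have "b \<notin> missing_high" using p1(2) \<open>b < p1\<close> by force
  hence "real b \<le> Q/2" using \<open>b \<in> missing\<close> by (simp add: missing_high_iff)
  ultimately show False
    using missing_between_unique[of a b] no_small ab(3) by auto
qed

lemma missing_high_gap:
  assumes no_small: "\<forall>s\<in>missing. sqrt Q < real s"
    and p1: "p1 \<in> missing_high" "\<forall>p\<in>missing_high. p1 \<le> p" and p2: "p2 \<in> missing_high" "p1 < p2"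
    and eta: "eta3 (Q/4) \<ge> 1/2"
  shows "(Q - real p1) * (Q - real p2) \<le> 2 * eps2 n * Q^2"
proof -
  define x where "x = real p1 + real p2 - Q"
  define y where "y = real p1 * real p2 / Q"
  define \<eta> where "\<eta> = eta3 (Q/4)"
  have p_lt_Q: "real p1 < Q" "real p2 < Q" using p1 p2 by (auto simp: missing_high_iff missing_iff)
  have "real p1 > 5*Q/8" "real p2 > 5*Q/8"
    using missing_above_half_gt[OF no_small] p1 p2 by (auto simp: missing_high_iff)
  hence x: "x \<ge> Q/4" "x \<le> Q" unfolding x_def using p_lt_Q by auto
  have yx: "y - x = (Q - real p1) * (Q - real p2) / Q"
    unfolding x_def y_def using Q_ge_2 by (simp add: field_simps)
  moreover have "0 < (Q - real p1) * (Q - real p2) / Q"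
    using p_lt_Q Q_ge_2 by (intro divide_pos_pos mult_pos_pos) auto
  ultimately have "x < y" by simp
  have "y - x \<le> (1 - \<eta>) * x / \<eta>"
    unfolding \<eta>_def using Q_ge_3481 x(1) \<open>x < y\<close> eta prime_window_at_most_one[OF no_small p1 p2]
    by (intro interval_le_eta3) (auto simp: x_def y_def)
  also have "\<dots> \<le> 2 * eps2 n * Q"
  proof (cases "\<eta> \<le> 1")
    case True
    have "(1 - \<eta>) * x / \<eta> \<le> (1 - \<eta>) * Q / (1/2)"
      using True eta x unfolding \<eta>_def by (intro frac_le mult_left_mono) auto
    also have "\<dots> \<le> 2 * eps2 n * Q"
      using eps2_ge_eta3 Q_ge_2 unfolding \<eta>_def by simp
    finally show ?thesis .
  next
    case False
    hence "(1 - \<eta>) * x / \<eta> \<le> 0"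
      using x Q_ge_2 by (intro divide_nonpos_pos mult_nonpos_nonneg) auto
    moreover have "0 \<le> 2 * eps2 n * Q" using Q_ge_2 eps2_nonneg by simp
    ultimately show ?thesis by linarith
  qed
  finally show ?thesis using yx Q_ge_2 by (simp add: divide_le_eq power2_eq_square mult.assoc)
qed

lemma second_missing_high_near_q:
  assumes no_small: "\<forall>s\<in>missing. sqrt Q < real s"
    and p1: "p1 \<in> missing_high" "\<forall>p\<in>missing_high. p1 \<le> p" and p2: "p2 \<in> missing_high" "p1 < p2"
    and eta: "eta3 (Q/4) \<ge> 1/2"
  shows "Q - real p2 \<le> 3/2 * (Q * sqrt (eps2 n))"
proof -
  have p2_Q: "real p2 \<le> Q" using p2 by (auto simp: missing_high_iff missing_iff)
  have "(Q - real p2)^2 \<le> (Q - real p1) * (Q - real p2)"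
    using p2 p2_Q unfolding power2_eq_square by (intro mult_right_mono) auto
  also have "\<dots> \<le> 2 * eps2 n * Q^2" by (rule missing_high_gap[OF assms])
  finally have "Q - real p2 \<le> sqrt (2 * eps2 n * Q^2)"
    using p2_Q real_sqrt_le_mono by fastforce
  also have "\<dots> = sqrt 2 * (Q * sqrt (eps2 n))"
    using Q_ge_2 by (simp add: real_sqrt_mult)
  also have "\<dots> \<le> 3/2 * (Q * sqrt (eps2 n))"
  proof -
    have "sqrt 2 \<le> sqrt (9/4::real)" by (intro real_sqrt_le_mono) simp
    hence "sqrt 2 \<le> (3/2::real)" by (simp add: real_sqrt_divide)
    thus ?thesis using Q_ge_2 eps2_nonneg by (intro mult_right_mono) auto
  qed
  finally show ?thesis .
qed

lemma ln_Q_le: "ln Q \<le> Q * sqrt (eps2 n)"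
proof -
  have "1 * ln Q \<le> sqrt Q * ln Q"
    using ln_Q_ge_1 Q_ge_2 by (intro mult_right_mono) auto
  thus ?thesis using sqrt_mult_ln_le by linarith
qed

lemma sum_ln_missing_high_two_le:
  assumes no_small: "\<forall>s\<in>missing. sqrt Q < real s"
    and p1: "p1 \<in> missing_high" "\<forall>p\<in>missing_high. p1 \<le> p"
    and p2: "p2 \<in> missing_high - {p1}" "\<forall>p\<in>missing_high - {p1}. p2 \<le> p"
    and eta: "eta3 (Q/4) \<ge> 1/2"
  shows "(\<Sum>p\<in>missing_high. ln (real p)) \<le> 3 * (Q * eps1 n) + 4 * (Q * sqrt (eps2 n))"
proof -
  define e1 where "e1 = eps1 n"
  define se where "se = sqrt (eps2 n)"
  have p2': "p2 \<in> missing_high" "p1 < p2" using p1 p2 by force+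
  have p2_Q: "real p2 > 5*Q/8" "real p2 \<le> Q" "p2 \<ge> 1"
    using p2' prime_ge_1_nat missing_above_half_gt[OF no_small]
    by (auto simp: missing_high_iff missing_iff)
  have "(\<Sum>p\<in>missing_high - {p1}. ln (real p)) \<le> (\<Sum>p\<in>{p. prime p \<and> p2 \<le> p \<and> real p \<le> Q}. ln (real p))"
  proof (rule sum_mono2)
    show "finite {p. prime p \<and> p2 \<le> p \<and> real p \<le> Q}"
      by (rule finite_subset[OF _ finite_primes_le[of Q]]) auto
    show "missing_high - {p1} \<subseteq> {p. prime p \<and> p2 \<le> p \<and> real p \<le> Q}"
      using p2(2) by (auto simp: missing_high_iff missing_iff)
  qed (auto dest: prime_ge_1_nat)
  also have "\<dots> = cheb_theta Q - cheb_theta (real p2 - 1)"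
    using p2_Q by (intro sum_ln_primes_between) auto
  also have "\<dots> \<le> Q * (1 + e1) - (real p2 - 1) * (1 - e1)"
    using cheb_theta_le_eps1[of Q] cheb_theta_ge_eps1[of "real p2 - 1"] p2_Q Q_ge_3481
    unfolding e1_def by simp
  also have "\<dots> = (Q - real p2) + 1 + e1 * (Q + real p2 - 1)" by (simp add: algebra_simps)
  also have "\<dots> \<le> 3/2 * (Q * se) + 1 + 2 * (Q * e1)"
  proof -
    have "e1 * (Q + real p2 - 1) \<le> e1 * (2 * Q)"
      using eps1_nonneg p2_Q unfolding e1_def by (intro mult_left_mono) auto
    also have "\<dots> = 2 * (Q * e1)" by simp
    finally show ?thesis
      using second_missing_high_near_q[OF no_small p1 p2' eta] unfolding se_def by simp
  qed
  finally have "(\<Sum>p\<in>missing_high - {p1}. ln (real p)) \<le> 3/2 * (Q * se) + 1 + 2 * (Q * e1)" .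
  moreover have "(\<Sum>p\<in>missing_high. ln (real p)) = ln (real p1) + (\<Sum>p\<in>missing_high - {p1}. ln (real p))"
    using finite_missing_high p1(1) by (simp add: sum.remove)
  moreover have "ln (real p1) \<le> ln Q"
    using p1 prime_gt_0_nat by (auto simp: missing_high_iff missing_iff)
  moreover have "0 \<le> Q * e1" using eps1_nonneg Q_ge_2 unfolding e1_def by simp
  ultimately show ?thesis using ln_Q_le ln_Q_ge_1 unfolding e1_def se_def by linarith
qed

lemma sum_ln_missing_high_le:
  assumes no_small: "\<forall>s\<in>missing. sqrt Q < real s"
  shows "(\<Sum>p\<in>missing_high. ln (real p)) \<le> 3 * (Q * eps1 n) + 4 * (Q * sqrt (eps2 n))"
proof -
  have QQ: "Q * eps1 n \<ge> 0" "Q * sqrt (eps2 n) \<ge> 0"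
    using Q_ge_2 eps1_nonneg eps2_nonneg by auto
  have high_le: "real p \<le> Q" "1 \<le> p" if "p \<in> missing_high" for p
    using that prime_ge_1_nat by (auto simp: missing_high_iff missing_iff)
  consider "card missing_high \<le> 1" | "eta3 (Q/4) < 1/2" | "card missing_high \<ge> 2" "eta3 (Q/4) \<ge> 1/2"
    by linarith
  thus ?thesis
  proof cases
    case 1
    have "(\<Sum>p\<in>missing_high. ln (real p)) \<le> card missing_high * ln Q"
      using high_le by (intro sum_ln_le_card_ln) auto
    also have "\<dots> \<le> 1 * ln Q" using 1 ln_Q_ge_1 by (intro mult_right_mono) auto
    finally show ?thesis using ln_Q_le QQ by linarith
  next
    case 2
    hence "sqrt (1/4) \<le> sqrt (eps2 n)" using eps2_ge_eta3 by (intro real_sqrt_le_mono) linarith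
    hence "1/2 \<le> sqrt (eps2 n)" by (simp add: real_sqrt_divide)
    have "(\<Sum>p\<in>missing_high. ln (real p)) \<le> cheb_theta Q"
      using high_le by (intro sum_ln_primes_le_cheb_theta) (auto simp: missing_high_iff missing_iff)
    also have "\<dots> \<le> Q + Q * eps1 n" using cheb_theta_le_eps1[of Q] Q_ge_2 by (simp add: algebra_simps)
    finally have "(\<Sum>p\<in>missing_high. ln (real p)) \<le> Q + Q * eps1 n" .
    moreover have "Q * (1/2) \<le> Q * sqrt (eps2 n)"
      using \<open>1/2 \<le> sqrt (eps2 n)\<close> Q_ge_2 by (intro mult_left_mono) auto
    ultimately show ?thesis using QQ by linarith
  next
    case 3
    define p1 where "p1 = Min missing_high"
    define p2 where "p2 = Min (missing_high - {p1})"
    have "missing_high \<noteq> {}" using 3 by auto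
    hence p1: "p1 \<in> missing_high" "\<forall>p\<in>missing_high. p1 \<le> p"
      unfolding p1_def using finite_missing_high by auto
    have "card (missing_high - {p1}) \<ge> 1" using 3 p1 finite_missing_high by simp
    hence "missing_high - {p1} \<noteq> {}" by (cases "missing_high - {p1} = {}") auto
    hence "p2 \<in> missing_high - {p1}"
      unfolding p2_def using finite_missing_high by (intro Min_in) auto
    moreover have "\<forall>p\<in>missing_high - {p1}. p2 \<le> p"
      unfolding p2_def using finite_missing_high by auto
    ultimately show ?thesis using sum_ln_missing_high_two_le[OF no_small p1] 3(2) by blast
  qed
qed

lemma sum_ln_missing_le: "(\<Sum>p\<in>missing. ln (real p)) \<le> 3 * (Q * eps1 n) + 6 * (Q * sqrt (eps2 n))"
proof -
  have W: "sqrt Q * ln Q \<le> Q * sqrt (eps2 n)" "ln Q \<le> sqrt Q * ln Q"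
      "0 \<le> Q * eps1 n" "0 \<le> Q * sqrt (eps2 n)"
    using sqrt_mult_ln_le ln_Q_ge_1 Q_ge_2 eps1_nonneg eps2_nonneg
      mult_right_mono[of 1 "sqrt Q" "ln Q"] by auto
  have low: "(\<Sum>p\<in>{p\<in>missing. real p \<le> Q/2}. ln (real p)) \<le> sqrt Q * ln Q + ln Q"
    using sum_ln_missing_le_half Q_ge_3481 by (simp add: algebra_simps)
  show ?thesis
  proof (cases "\<forall>s\<in>missing. sqrt Q < real s")
    case True
    thus ?thesis using sum_ln_missing_split low sum_ln_missing_high_le W by linarith
  next
    case False
    then obtain s where "s \<in> missing" "real s \<le> sqrt Q" by (auto simp: not_less)
    hence "(\<Sum>p\<in>missing_high. ln (real p)) \<le> sqrt Q * ln Q"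
      using Q_ge_3481 by (intro sum_ln_missing_high_le_if_small) auto
    thus ?thesis using sum_ln_missing_split low W by linarith
  qed
qed

lemma ln_landau_g_ge_eighth: "Q/8 \<le> ln (real M)"
proof (cases "\<forall>s\<in>missing. sqrt Q < real s")
  case True
  have "{p\<in>missing. real p \<le> 5*Q/8} = {p\<in>missing. real p \<le> Q/2}"
    using missing_above_half_gt[OF True] by force
  hence "ln (real M) \<ge> cheb_theta (5*Q/8) - (\<Sum>p\<in>{p\<in>missing. real p \<le> Q/2}. ln (real p))"
    using ln_landau_g_ge_theta[of "5*Q/8"] Q_ge_2 by simp
  moreover have "(\<Sum>p\<in>{p\<in>missing. real p \<le> Q/2}. ln (real p)) \<le> (sqrt Q + 1) * ln Q"
    using Q_ge_3481 by (intro sum_ln_missing_le_half) simp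
  ultimately show ?thesis
    using cheb_theta_ge_quarter[of "5*Q/8"] sqrt_ln_le_eighth by simp
next
  case False
  then obtain s where "s \<in> missing" "real s \<le> sqrt Q" by (auto simp: not_less)
  hence "(\<Sum>p\<in>missing_high. ln (real p)) \<le> sqrt Q * ln Q"
    using Q_ge_3481 by (intro sum_ln_missing_high_le_if_small) auto
  moreover have "(\<Sum>p\<in>{p\<in>missing. real p \<le> Q/2}. ln (real p)) \<le> (sqrt Q + 1) * ln Q"
    using Q_ge_3481 by (intro sum_ln_missing_le_half) simp
  ultimately have "ln (real M) \<ge> cheb_theta Q - (2 * sqrt Q + 1) * ln Q"
    using ln_landau_g_ge_theta_missing sum_ln_missing_split by (simp add: algebra_simps)
  thus ?thesis
    using cheb_theta_ge_quarter[of Q] sqrt_ln_le_eighth Q_ge_2 by simp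
qed

theorem Pplus_landau_g_le: "Q \<le> ln (real M) * (1 + 48 * eps n)"
proof -
  have eps: "eps n = eps1 n + sqrt (eps2 n)" "eps n \<ge> 0"
    unfolding eps_def using eps1_nonneg eps2_nonneg by auto
  have "cheb_theta Q \<ge> Q - Q * eps1 n"
    using cheb_theta_ge_eps1[of Q] Q_ge_2 by (simp add: algebra_simps)
  hence "Q - ln (real M) \<le> Q * eps1 n + (\<Sum>p\<in>missing. ln (real p))"
    using ln_landau_g_ge_theta_missing by linarith
  also have "\<dots> \<le> 6 * Q * eps n"
  proof -
    have "6 * Q * eps n = 6 * (Q * eps1 n) + 6 * (Q * sqrt (eps2 n))"
      by (simp add: eps algebra_simps)
    moreover have "0 \<le> Q * eps1 n" using eps1_nonneg Q_ge_2 by simp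
    ultimately show ?thesis using sum_ln_missing_le by linarith
  qed
  also have "\<dots> \<le> 48 * ln (real M) * eps n"
    using ln_landau_g_ge_eighth eps(2) by (simp add: mult_right_mono)
  finally show ?thesis by (simp add: algebra_simps)
qed

end

theorem mainTheorem16:
  "\<exists>C::real. \<forall>\<^sub>F n in at_top.
     real (Pplus (landau_g n)) \<le> ln (real (landau_g n)) * (1 + C * eps n)"
proof (intro exI[of _ 48])
  obtain Q0 where Q0: "\<forall>Q\<ge>Q0. sufficiently_large Q"
    using eventually_sufficiently_large unfolding eventually_at_top_linorder by blast
  show "\<forall>\<^sub>F n in at_top. real (Pplus (landau_g n)) \<le> ln (real (landau_g n)) * (1 + 48 * eps n)"
    using eventually_landau_g_Pplus_ge[of "nat \<lceil>Q0\<rceil>"]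
  proof eventually_elim
    case (elim n)
    hence "Q0 \<le> real (Pplus (landau_g n))" by (simp add: nat_le_iff ceiling_le_iff)
    hence "sufficiently_large (real (Pplus (landau_g n)))" using Q0 by blast
    with elim interpret landau_index_large n by unfold_locales auto
    show ?case by (rule Pplus_landau_g_le)
  qed
qed

end
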